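(* Let $b>1$, $R_{1b}=\{z\in\mathbb{C}: 1\le|z|\le b\}$, and let $f$ be an orientation preserving $C^1$-smooth homeomorphism defined in a neighborhood of $R_{1b}$ with Jacobian $J_f>0$ on $R_{1b}$. For $\theta\in[0,2\pi)$ let $\gamma_\theta$ be the radial segment $\{re^{i\theta}:1\le r\le b\}$, let $\Gamma_0=\{\gamma_\theta:\theta\in[0,2\pi)\}$ and $\Gamma_0'=f(\Gamma_0)=\{f(\gamma_\theta)\}$. Then \[ M_2(\Gamma_0')=\int_0^{2\pi}\left(\int_1^b\frac{D_{f,\theta}(re^{i\theta})}{r}\,dr\right)^{-1}d\theta, \] and the function \[ \rho_0=\left(\frac{D_{f,\theta}/r}{|f_r|\int_1^b \frac{D_{f,\theta}}{r}\,dr}\right)\circ f^{-1} \] (where the quantity in parentheses is evaluated at $z=re^{i\theta}$) is the extremal function for $M_2(\Gamma_0')$, i.e. it is admissible for $\Gamma_0'$ and $M_2(\Gamma_0')=\int\rho_0^2\,dm$.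
   Context: $M_2$ denotes the 2-module of a curve family in the plane: the infimum of $\int\rho^2\,dm$ ($m$ = Lebesgue measure) over non-negative Borel $\rho$ with $\int_\gamma\rho\,ds\ge1$ for all curves $\gamma$ of the family. For $z=re^{i\theta}$, $f_r=\frac{\partial}{\partial r}f(re^{i\theta})$, the complex dilatation is $\mu_f=f_{\bar z}/f_z$, $J_f=|f_z|^2-|f_{\bar z}|^2$, and the directional dilatation of $f$ in direction $\alpha\in\mathbb{R}$ is $D_{f,\alpha}=\frac{|1+e^{-2i\alpha}\mu_f|^2}{1-|\mu_f|^2}$; in particular $D_{f,\theta}(re^{i\theta})=|f_r|^2/J_f$. *)

theory Defs
  imports "HOL-Analysis.Analysis"
begin

definition dx :: "(complex \<Rightarrow> complex) \<Rightarrow> complex \<Rightarrow> complex" where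
  "dx f z = frechet_derivative f (at z) 1"

definition dy :: "(complex \<Rightarrow> complex) \<Rightarrow> complex \<Rightarrow> complex" where
  "dy f z = frechet_derivative f (at z) \<i>"

definition dz :: "(complex \<Rightarrow> complex) \<Rightarrow> complex \<Rightarrow> complex" where
  "dz f z = (dx f z - \<i> * dy f z) / 2"

definition dzbar :: "(complex \<Rightarrow> complex) \<Rightarrow> complex \<Rightarrow> complex" where
  "dzbar f z = (dx f z + \<i> * dy f z) / 2"

definition jac :: "(complex \<Rightarrow> complex) \<Rightarrow> complex \<Rightarrow> real" where
  "jac f z = (cmod (dz f z))\<^sup>2 - (cmod (dzbar f z))\<^sup>2"

definition cdil :: "(complex \<Rightarrow> complex) \<Rightarrow> complex \<Rightarrow> complex" where
  "cdil f z = dzbar f z / dz f z"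

definition dir_dil :: "(complex \<Rightarrow> complex) \<Rightarrow> real \<Rightarrow> complex \<Rightarrow> real" where
  "dir_dil f \<alpha> z = (cmod (1 + exp (- 2 * \<i> * complex_of_real \<alpha>) * cdil f z))\<^sup>2
                      / (1 - (cmod (cdil f z))\<^sup>2)"

definition rad_deriv :: "(complex \<Rightarrow> complex) \<Rightarrow> complex \<Rightarrow> complex" where
  "rad_deriv f z = frechet_derivative f (at z) (z / complex_of_real (cmod z))"

text \<open>A curve is given as a triple (g, a, c): a C^1 parametrisation g on [a,c].
  Arc-length integral of a Borel rho >= 0 along it: \<integral>_a^c rho(g t) |g'(t)| dt.\<close>
definition ds_integral :: "(complex \<Rightarrow> ennreal) \<Rightarrow> (real \<Rightarrow> complex) \<Rightarrow> real \<Rightarrow> real \<Rightarrow> ennreal" where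
  "ds_integral \<rho> g a c =
     (\<integral>\<^sup>+ t. indicator {a..c} t * \<rho> (g t) *
          ennreal (norm (vector_derivative g (at t within {a..c}))) \<partial>lborel)"

definition admissible2 :: "((real \<Rightarrow> complex) \<times> real \<times> real) set \<Rightarrow> (complex \<Rightarrow> ennreal) \<Rightarrow> bool" where
  "admissible2 \<Gamma> \<rho> \<longleftrightarrow> \<rho> \<in> borel_measurable borel \<and>
      (\<forall>(g, a, c) \<in> \<Gamma>. ds_integral \<rho> g a c \<ge> 1)"

definition modulus2 :: "((real \<Rightarrow> complex) \<times> real \<times> real) set \<Rightarrow> ennreal" where
  "modulus2 \<Gamma> = (INF \<rho> \<in> {\<rho>. admissible2 \<Gamma> \<rho>}. \<integral>\<^sup>+ z. (\<rho> z)\<^sup>2 \<partial>lborel)"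

definition annulus :: "real \<Rightarrow> complex set" where
  "annulus b = {z. 1 \<le> cmod z \<and> cmod z \<le> b}"

definition radial_image_family :: "(complex \<Rightarrow> complex) \<Rightarrow> real \<Rightarrow> ((real \<Rightarrow> complex) \<times> real \<times> real) set" where
  "radial_image_family f b =
     {((\<lambda>r. f (complex_of_real r * exp (\<i> * complex_of_real \<theta>))), 1, b) | \<theta>. 0 \<le> \<theta> \<and> \<theta> < 2 * pi}"

definition radial_dil_integral :: "(complex \<Rightarrow> complex) \<Rightarrow> real \<Rightarrow> real \<Rightarrow> real" where
  "radial_dil_integral f b \<theta> =
     integral {1..b} (\<lambda>r. dir_dil f \<theta> (complex_of_real r * exp (\<i> * complex_of_real \<theta>)) / r)"

text \<open>The candidate extremal density rho_0, with g = f^{-1}; extended by 0 off f(R_{1b}).\<close>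
definition rho0 :: "(complex \<Rightarrow> complex) \<Rightarrow> (complex \<Rightarrow> complex) \<Rightarrow> real \<Rightarrow> complex \<Rightarrow> ennreal" where
  "rho0 f g b w =
     (if w \<in> f ` annulus b then
        (let z = g w; r = cmod z; \<theta> = Arg z in
          ennreal ((dir_dil f \<theta> z / r) / (cmod (rad_deriv f z) * radial_dil_integral f b \<theta>)))
      else 0)"

end

theory Submission
  imports Defs
begin

(*
  In polar coordinates w = f(r e^(i\<theta>)) the area element is dm(w) = r J_f dr d\<theta>, and the
  \<rho>-length of f(\<gamma>_\<theta>) is the integral of \<rho> |f_r| dr.  Since |f_r|^2 = D_f,\<theta> J_f, Cauchy-Schwarz
  along each radius with the weights sqrt(r J_f) and |f_r| / sqrt(r J_f) gives, for admissible \<rho>,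
    1 \<le> (\<integral> \<rho> |f_r| dr)^2 \<le> (\<integral> \<rho>^2 r J_f dr) * (\<integral> D_f,\<theta> / r dr).
  Integrating over \<theta> bounds \<integral> \<rho>^2 dm from below by the claimed value, and \<rho>_0, which turns every
  one of these Cauchy-Schwarz inequalities into an equality, is admissible and attains the bound.
*)

section \<open>Change of variables for nonnegative integrals\<close>

lemma emeasure_lborel_differentiable_image:
  fixes \<Psi> :: "real^'n::{finite,wellorder} \<Rightarrow> real^'n::{finite,wellorder}"
  assumes T: "T \<in> sets borel" and image_T: "\<Psi> ` T \<in> sets borel"
    and der: "\<And>x. x \<in> T \<Longrightarrow> (\<Psi> has_derivative \<Psi>' x) (at x within T)"
    and inj: "inj_on \<Psi> T" and "bounded T"
    and bound: "\<And>x. x \<in> T \<Longrightarrow> \<bar>det (matrix (\<Psi>' x))\<bar> \<le> M"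
    and meas: "(\<lambda>x. indicator T x * \<bar>det (matrix (\<Psi>' x))\<bar>) \<in> borel_measurable borel"
  shows "emeasure lborel (\<Psi> ` T) = (\<integral>\<^sup>+x. ennreal (indicator T x * \<bar>det (matrix (\<Psi>' x))\<bar>) \<partial>lborel)"
proof -
  define d where "d = (\<lambda>x. \<bar>det (matrix (\<Psi>' x))\<bar>)"
  have "(\<integral>\<^sup>+x. ennreal (indicator T x * d x) \<partial>lborel) \<le> (\<integral>\<^sup>+x. ennreal M * indicator T x \<partial>lborel)"
    by (intro nn_integral_mono) (auto simp: d_def bound split: split_indicator intro: ennreal_leI)
  also have "\<dots> < \<infinity>"
    using T emeasure_bounded_finite[OF \<open>bounded T\<close>]
    by (simp add: nn_integral_cmult_indicator ennreal_mult_less_top)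
  finally obtain m where m: "(\<integral>\<^sup>+x. ennreal (indicator T x * d x) \<partial>lborel) = ennreal m" "m \<ge> 0"
    by (auto simp: less_top_ennreal)
  have "((\<lambda>x. indicator T x * d x) has_integral m) UNIV"
    using meas by (intro nn_integral_has_integral[OF _ _ m]) (simp_all add: d_def)
  then have "(d has_integral m) T"
    by (simp add: indicator_times_eq_if(1))
  then have "measure lebesgue (\<Psi> ` T) = m" "\<Psi> ` T \<in> lmeasurable"
    using has_measure_differentiable_image[of T \<Psi> \<Psi>'] T der inj by (auto simp: d_def)
  moreover have "emeasure lborel (\<Psi> ` T) = emeasure lebesgue (\<Psi> ` T)"
    using image_T by simp
  ultimately show ?thesis
    using m by (simp add: emeasure_eq_measure2 d_def)
qed

lemma density_indicator_image_eq_distr: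
  fixes \<Psi> :: "real^'n::{finite,wellorder} \<Rightarrow> real^'n::{finite,wellorder}"
  assumes S[measurable]: "S \<in> sets borel" and image_S: "\<Psi> ` S \<in> sets borel"
    and der: "\<And>x. x \<in> S \<Longrightarrow> (\<Psi> has_derivative \<Psi>' x) (at x within S)"
    and inj: "inj_on \<Psi> S" and bounded: "bounded S"
    and bound: "\<And>x. x \<in> S \<Longrightarrow> \<bar>det (matrix (\<Psi>' x))\<bar> \<le> M"
    and meas: "(\<lambda>x. indicator S x * \<bar>det (matrix (\<Psi>' x))\<bar>) \<in> borel_measurable borel"
  shows "density lborel (indicator (\<Psi> ` S))
    = distr (density lborel (\<lambda>x. ennreal (indicator S x * \<bar>det (matrix (\<Psi>' x))\<bar>))) borel
        (\<lambda>x. indicator S x *\<^sub>R \<Psi> x)"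
    (is "_ = distr (density lborel ?D) borel ?\<Psi>0")
proof (rule measure_eqI)
  have [measurable]: "?\<Psi>0 \<in> borel_measurable borel"
    using S has_derivative_continuous_on[OF der] by (rule borel_measurable_continuous_on_indicator)
  have D_meas: "?D \<in> borel_measurable lborel"
    using meas by simp
  fix B assume "B \<in> sets (density lborel (indicator (\<Psi> ` S)))"
  then have B[measurable]: "B \<in> sets borel" by simp
  define T where "T = S \<inter> \<Psi> -` B"
  have preimage_B: "?\<Psi>0 -` B \<in> sets borel"
    using measurable_sets[of ?\<Psi>0 borel borel B] by simp
  have T_eq: "T = S \<inter> ?\<Psi>0 -` B"
    by (auto simp: T_def)
  then have T: "T \<in> sets borel"
    using preimage_B by simp
  have image_T: "\<Psi> ` T = \<Psi> ` S \<inter> B"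
    by (auto simp: T_def)
  have "emeasure (density lborel (indicator (\<Psi> ` S))) B = emeasure lborel (\<Psi> ` T)"
    using image_S by (simp add: emeasure_density image_T indicator_inter_arith[symmetric] nn_integral_indicator
        del: nn_integral_indicator_finite)
  also have "\<dots> = (\<integral>\<^sup>+x. ennreal (indicator T x * \<bar>det (matrix (\<Psi>' x))\<bar>) \<partial>lborel)"
  proof (rule emeasure_lborel_differentiable_image[OF T])
    have "(\<lambda>x. indicator (?\<Psi>0 -` B) x * (indicator S x * \<bar>det (matrix (\<Psi>' x))\<bar>)) \<in> borel_measurable borel"
      using preimage_B by (intro borel_measurable_times meas) simp
    then show "(\<lambda>x. indicator T x * \<bar>det (matrix (\<Psi>' x))\<bar>) \<in> borel_measurable borel"
      unfolding T_eq indicator_inter_arith by (simp add: ac_simps)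
    show "\<Psi> ` T \<in> sets borel"
      using image_S by (simp add: image_T)
  qed (use bounded bound der inj in \<open>auto simp: T_def intro: has_derivative_subset inj_on_subset bounded_subset\<close>)
  also have "\<dots> = emeasure (distr (density lborel ?D) borel ?\<Psi>0) B"
    using preimage_B by (auto simp: emeasure_distr emeasure_density[OF D_meas] T_eq
        intro!: nn_integral_cong split: split_indicator)
  finally show "emeasure (density lborel (indicator (\<Psi> ` S))) B = emeasure (distr (density lborel ?D) borel ?\<Psi>0) B" .
qed simp

lemma nn_integral_change_of_variables:
  fixes \<Psi> :: "real^'n::{finite,wellorder} \<Rightarrow> real^'n::{finite,wellorder}"
    and h :: "real^'n::{finite,wellorder} \<Rightarrow> ennreal"
  assumes S[measurable]: "S \<in> sets borel" and image_S: "\<Psi> ` S \<in> sets borel"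
    and der: "\<And>x. x \<in> S \<Longrightarrow> (\<Psi> has_derivative \<Psi>' x) (at x within S)"
    and inj: "inj_on \<Psi> S" and bounded: "bounded S"
    and bound: "\<And>x. x \<in> S \<Longrightarrow> \<bar>det (matrix (\<Psi>' x))\<bar> \<le> M"
    and meas: "(\<lambda>x. indicator S x * \<bar>det (matrix (\<Psi>' x))\<bar>) \<in> borel_measurable borel"
    and h[measurable]: "h \<in> borel_measurable borel"
  shows "(\<integral>\<^sup>+y. indicator (\<Psi> ` S) y * h y \<partial>lborel)
       = (\<integral>\<^sup>+x. indicator S x * ennreal \<bar>det (matrix (\<Psi>' x))\<bar> * h (\<Psi> x) \<partial>lborel)"
proof -
  have [measurable]: "(\<lambda>x. indicator S x *\<^sub>R \<Psi> x) \<in> borel_measurable borel"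
    using S has_derivative_continuous_on[OF der] by (rule borel_measurable_continuous_on_indicator)
  have D_meas: "(\<lambda>x. ennreal (indicator S x * \<bar>det (matrix (\<Psi>' x))\<bar>)) \<in> borel_measurable lborel"
    using meas by simp
  have "(\<integral>\<^sup>+y. indicator (\<Psi> ` S) y * h y \<partial>lborel) = (\<integral>\<^sup>+y. h y \<partial>density lborel (indicator (\<Psi> ` S)))"
    using image_S by (simp add: nn_integral_density)
  also have "\<dots> = (\<integral>\<^sup>+x. h (indicator S x *\<^sub>R \<Psi> x)
      \<partial>density lborel (\<lambda>x. ennreal (indicator S x * \<bar>det (matrix (\<Psi>' x))\<bar>)))"
    by (simp add: density_indicator_image_eq_distr[OF S image_S der inj bounded bound meas] nn_integral_distr)
  also have "\<dots> = (\<integral>\<^sup>+x. ennreal (indicator S x * \<bar>det (matrix (\<Psi>' x))\<bar>) * h (indicator S x *\<^sub>R \<Psi> x) \<partial>lborel)"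
    by (rule nn_integral_density[OF D_meas]) measurable
  also have "\<dots> = (\<integral>\<^sup>+x. indicator S x * ennreal \<bar>det (matrix (\<Psi>' x))\<bar> * h (\<Psi> x) \<partial>lborel)"
    by (intro nn_integral_cong) (auto split: split_indicator)
  finally show ?thesis .
qed

text \<open>HOL-Analysis proves change of variables only on \<open>real^'n\<close>; these coordinate
  isomorphisms transport it to \<open>real \<times> real\<close> and \<open>complex\<close>.\<close>

definition vec_of_pair :: "real \<times> real \<Rightarrow> real^2" where
  "vec_of_pair p = (\<chi> i. if i = 1 then fst p else snd p)"

definition pair_of_vec :: "real^2 \<Rightarrow> real \<times> real" where
  "pair_of_vec x = (x$1, x$2)"

definition complex_of_vec :: "real^2 \<Rightarrow> complex" where
  "complex_of_vec x = Complex (x$1) (x$2)"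

definition vec_of_complex :: "complex \<Rightarrow> real^2" where
  "vec_of_complex z = (\<chi> i. if i = 1 then Re z else Im z)"

lemma vec_of_complex_nth [simp]: "vec_of_complex z $ 1 = Re z" "vec_of_complex z $ 2 = Im z"
  by (simp_all add: vec_of_complex_def)

lemma pair_of_vec_of_pair [simp]: "pair_of_vec (vec_of_pair p) = p"
  by (simp add: pair_of_vec_def vec_of_pair_def)

lemma vec_of_pair_of_vec [simp]: "vec_of_pair (pair_of_vec x) = x"
  by (simp add: pair_of_vec_def vec_of_pair_def vec_eq_iff forall_2)

lemma complex_of_vec_of_complex [simp]: "complex_of_vec (vec_of_complex z) = z"
  by (simp add: complex_of_vec_def vec_of_complex_def complex_eq_iff)

lemma vec_of_complex_of_vec [simp]: "vec_of_complex (complex_of_vec x) = x"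
  by (simp add: complex_of_vec_def vec_of_complex_def vec_eq_iff forall_2)

lemma bounded_linear_vec_of_pair: "bounded_linear vec_of_pair"
  by (simp add: linear_conv_bounded_linear[symmetric] linearI vec_of_pair_def vec_eq_iff)

lemma bounded_linear_pair_of_vec: "bounded_linear pair_of_vec"
  by (simp add: linear_conv_bounded_linear[symmetric] linearI pair_of_vec_def)

lemma bounded_linear_complex_of_vec: "bounded_linear complex_of_vec"
  by (simp add: linear_conv_bounded_linear[symmetric] linearI complex_of_vec_def complex_eq_iff)

lemma bounded_linear_vec_of_complex: "bounded_linear vec_of_complex"
  by (simp add: linear_conv_bounded_linear[symmetric] linearI vec_of_complex_def vec_eq_iff)

lemmas borel_measurable_vec_of_pair [measurable] =
  borel_measurable_continuous_onI[OF linear_continuous_on, OF bounded_linear_vec_of_pair]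
lemmas borel_measurable_pair_of_vec [measurable] =
  borel_measurable_continuous_onI[OF linear_continuous_on, OF bounded_linear_pair_of_vec]
lemmas borel_measurable_complex_of_vec [measurable] =
  borel_measurable_continuous_onI[OF linear_continuous_on, OF bounded_linear_complex_of_vec]

lemma Basis_vec2: "(Basis :: (real^2) set) = {axis 1 1, axis 2 1}"
  by (auto simp: Basis_vec_def UNIV_2)

lemma lborel_eq_distr_vec_of_pair: "(lborel :: (real^2) measure) = distr lborel borel vec_of_pair"
proof (rule lborel_eqI)
  fix l u :: "real^2" assume le: "\<And>b. b \<in> Basis \<Longrightarrow> l \<bullet> b \<le> u \<bullet> b"
  have "l$1 \<le> u$1" "l$2 \<le> u$2"
    using le[of "axis 1 1"] le[of "axis 2 1"] by (auto simp: Basis_vec2 inner_axis)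
  moreover have "vec_of_pair -` box l u = box (l$1, l$2) (u$1, u$2)"
    by (auto simp: mem_box_cart mem_box Basis_prod_def forall_2 vec_of_pair_def)
  ultimately have "emeasure (distr lborel borel vec_of_pair) (box l u) = (u$1 - l$1) * (u$2 - l$2)"
    by (simp add: emeasure_distr, subst emeasure_lborel_box)
       (auto simp: Basis_prod_def ennreal_mult mult.commute)
  then show "emeasure (distr lborel borel vec_of_pair) (box l u) = (\<Prod>b\<in>Basis. (u - l) \<bullet> b)"
    by (simp add: Basis_vec2 axis_eq_axis inner_axis)
qed simp

lemma lborel_eq_distr_complex_of_vec: "(lborel :: complex measure) = distr lborel borel complex_of_vec"
proof (rule lborel_eqI)
  fix l u :: complex assume le: "\<And>b. b \<in> Basis \<Longrightarrow> l \<bullet> b \<le> u \<bullet> b"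
  have "Re l \<le> Re u" "Im l \<le> Im u"
    using le[of 1] le[of \<i>] by (auto simp: Basis_complex_def)
  moreover have "complex_of_vec -` box l u = box (vec_of_complex l) (vec_of_complex u)"
    by (auto simp: mem_box_cart mem_box Basis_complex_def forall_2 complex_of_vec_def vec_of_complex_def)
  ultimately have "emeasure (distr lborel borel complex_of_vec) (box l u) = (Re u - Re l) * (Im u - Im l)"
    by (simp add: emeasure_distr, subst emeasure_lborel_box)
       (auto simp: Basis_vec2 inner_axis axis_eq_axis ennreal_mult)
  then show "emeasure (distr lborel borel complex_of_vec) (box l u) = (\<Prod>b\<in>Basis. (u - l) \<bullet> b)"
    by (simp add: Basis_complex_def)
qed simp

lemma nn_integral_lborel_complex_of_vec:
  assumes "F \<in> borel_measurable borel"
  shows "(\<integral>\<^sup>+z. F z \<partial>lborel) = (\<integral>\<^sup>+x. F (complex_of_vec x) \<partial>lborel)"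
  using assms by (simp add: lborel_eq_distr_complex_of_vec nn_integral_distr)

lemma nn_integral_lborel_pair_of_vec:
  assumes "F \<in> borel_measurable borel"
  shows "(\<integral>\<^sup>+p. F p \<partial>lborel) = (\<integral>\<^sup>+x. F (pair_of_vec x) \<partial>lborel)"
proof -
  have distr_eq: "distr lborel borel pair_of_vec = (lborel :: (real \<times> real) measure)"
    by (simp add: lborel_eq_distr_vec_of_pair distr_distr comp_def distr_id2)
  show ?thesis
    using assms by (subst (1) distr_eq[symmetric], subst nn_integral_distr) simp_all
qed

lemma image_vec_of_pair: "vec_of_pair ` A = pair_of_vec -` A"
proof (intro equalityI subsetI)
  fix x assume "x \<in> pair_of_vec -` A"
  then show "x \<in> vec_of_pair ` A"
    by (metis image_eqI vec_of_pair_of_vec vimageD)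
qed auto

lemma image_vec_of_complex: "vec_of_complex ` A = complex_of_vec -` A"
proof (intro equalityI subsetI)
  fix x assume "x \<in> complex_of_vec -` A"
  then show "x \<in> vec_of_complex ` A"
    by (metis image_eqI vec_of_complex_of_vec vimageD)
qed auto

definition plane_det :: "(real \<times> real \<Rightarrow> complex) \<Rightarrow> real" where
  "plane_det L = Re (L (1, 0)) * Im (L (0, 1)) - Im (L (1, 0)) * Re (L (0, 1))"

lemma det_matrix_eq_plane_det: "det (matrix (vec_of_complex \<circ> L \<circ> pair_of_vec)) = plane_det L"
proof -
  have "pair_of_vec (axis 1 1) = (1, 0)" "pair_of_vec (axis 2 1) = (0, 1)"
    by (simp_all add: pair_of_vec_def axis_def)
  then show ?thesis
    by (simp add: det_2 matrix_def plane_det_def)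
qed

lemma nn_integral_change_of_variables_plane:
  fixes \<Phi> :: "real \<times> real \<Rightarrow> complex" and h :: "complex \<Rightarrow> ennreal"
  assumes S[measurable]: "S \<in> sets borel" and image_S[measurable]: "\<Phi> ` S \<in> sets borel"
    and der: "\<And>p. p \<in> S \<Longrightarrow> (\<Phi> has_derivative \<Phi>' p) (at p within S)"
    and inj: "inj_on \<Phi> S" and bounded: "bounded S"
    and bound: "\<And>p. p \<in> S \<Longrightarrow> \<bar>plane_det (\<Phi>' p)\<bar> \<le> M"
    and meas: "(\<lambda>p. indicator S p * \<bar>plane_det (\<Phi>' p)\<bar>) \<in> borel_measurable borel"
    and h[measurable]: "h \<in> borel_measurable borel"
  shows "(\<integral>\<^sup>+z. indicator (\<Phi> ` S) z * h z \<partial>lborel)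
       = (\<integral>\<^sup>+p. indicator S p * ennreal \<bar>plane_det (\<Phi>' p)\<bar> * h (\<Phi> p) \<partial>lborel)"
proof -
  define \<Psi> where "\<Psi> = vec_of_complex \<circ> \<Phi> \<circ> pair_of_vec"
  define \<Psi>' where "\<Psi>' x = vec_of_complex \<circ> \<Phi>' (pair_of_vec x) \<circ> pair_of_vec" for x
  define S' where "S' = vec_of_pair ` S"
  have image_S': "\<Psi> ` S' = complex_of_vec -` (\<Phi> ` S)"
    unfolding \<Psi>_def S'_def image_vec_of_complex[symmetric] by (simp add: image_image)
  have [measurable]: "S' \<in> sets borel"
    using measurable_sets[of pair_of_vec borel borel S] by (simp add: S'_def image_vec_of_pair)
  have [measurable]: "\<Psi> ` S' \<in> sets borel"
    using measurable_sets[of complex_of_vec borel borel "\<Phi> ` S"] by (simp add: image_S')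
  have det_eq: "det (matrix (\<Psi>' x)) = plane_det (\<Phi>' (pair_of_vec x))" for x
    by (simp add: \<Psi>'_def det_matrix_eq_plane_det)
  define G where "G p = ennreal (indicator S p * \<bar>plane_det (\<Phi>' p)\<bar>) * h (indicator S p *\<^sub>R \<Phi> p)" for p
  have "(\<lambda>p. indicator S p *\<^sub>R \<Phi> p) \<in> borel_measurable borel"
    using S has_derivative_continuous_on[OF der] by (rule borel_measurable_continuous_on_indicator)
  then have [measurable]: "G \<in> borel_measurable borel"
    unfolding G_def[abs_def] using meas by measurable
  have "(\<integral>\<^sup>+z. indicator (\<Phi> ` S) z * h z \<partial>lborel)
      = (\<integral>\<^sup>+x. indicator (\<Psi> ` S') x * h (complex_of_vec x) \<partial>lborel)"
    by (subst nn_integral_lborel_complex_of_vec) (simp_all add: image_S' indicator_def)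
  also have "\<dots> = (\<integral>\<^sup>+x. indicator S' x * ennreal \<bar>det (matrix (\<Psi>' x))\<bar> * h (complex_of_vec (\<Psi> x)) \<partial>lborel)"
  proof (rule nn_integral_change_of_variables)
    show "(\<Psi> has_derivative \<Psi>' x) (at x within S')" if "x \<in> S'" for x
    proof -
      have "(\<Phi> has_derivative \<Phi>' (pair_of_vec x)) (at (pair_of_vec x) within pair_of_vec ` S')"
        using der that by (auto simp: S'_def image_image)
      then show ?thesis
        unfolding \<Psi>_def \<Psi>'_def
        by (intro diff_chain_within bounded_linear.has_derivative[OF bounded_linear_vec_of_complex]
            bounded_linear_imp_has_derivative bounded_linear_pair_of_vec) (simp_all add: comp_def)
    qed
    show "inj_on \<Psi> S'"
      using inj by (auto simp: \<Psi>_def S'_def inj_on_def) (metis complex_of_vec_of_complex)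
    show "bounded S'"
      unfolding S'_def by (rule bounded_linear_image[OF bounded bounded_linear_vec_of_pair])
    show "\<bar>det (matrix (\<Psi>' x))\<bar> \<le> M" if "x \<in> S'" for x
      using bound that by (auto simp: det_eq S'_def)
    show "(\<lambda>x. indicator S' x * \<bar>det (matrix (\<Psi>' x))\<bar>) \<in> borel_measurable borel"
      using measurable_compose[OF borel_measurable_pair_of_vec meas]
      by (simp add: det_eq S'_def image_vec_of_pair comp_def indicator_def)
  qed measurable
  also have "\<dots> = (\<integral>\<^sup>+x. G (pair_of_vec x) \<partial>lborel)"
    by (intro nn_integral_cong) (simp add: G_def S'_def image_vec_of_pair det_eq \<Psi>_def indicator_def)
  also have "\<dots> = (\<integral>\<^sup>+p. G p \<partial>lborel)"
    by (rule nn_integral_lborel_pair_of_vec[symmetric]) measurable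
  also have "\<dots> = (\<integral>\<^sup>+p. indicator S p * ennreal \<bar>plane_det (\<Phi>' p)\<bar> * h (\<Phi> p) \<partial>lborel)"
    by (intro nn_integral_cong) (simp add: G_def indicator_def)
  finally show ?thesis .
qed

lemma weighted_Cauchy_Schwarz_nn_integral:
  fixes u :: "'a::euclidean_space \<Rightarrow> ennreal" and w q :: "'a \<Rightarrow> real"
  assumes A[measurable]: "A \<in> sets borel"
    and u[measurable]: "(\<lambda>x. indicator A x * u x) \<in> borel_measurable borel"
    and "continuous_on A w" and "continuous_on A q"
    and w_pos: "\<And>x. x \<in> A \<Longrightarrow> w x > 0" and q_nonneg: "\<And>x. x \<in> A \<Longrightarrow> q x \<ge> 0"
  shows "(\<integral>\<^sup>+x. indicator A x * u x * ennreal (q x) \<partial>lborel)\<^sup>2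
    \<le> (\<integral>\<^sup>+x. indicator A x * ennreal (w x) * (u x)\<^sup>2 \<partial>lborel)
      * (\<integral>\<^sup>+x. indicator A x * ennreal ((q x)\<^sup>2 / w x) \<partial>lborel)"
proof -
  define F where "F x = indicator A x * u x * ennreal (indicator A x *\<^sub>R sqrt (w x))" for x
  define G where "G x = ennreal (indicator A x *\<^sub>R (q x / sqrt (w x)))" for x
  have "continuous_on A (\<lambda>x. sqrt (w x))"
    using assms(3) by (intro continuous_intros)
  then have [measurable]: "(\<lambda>x. indicator A x *\<^sub>R sqrt (w x)) \<in> borel_measurable borel"
    by (rule borel_measurable_continuous_on_indicator[OF A])
  have "continuous_on A (\<lambda>x. q x / sqrt (w x))"
    using assms(3,4) by (auto intro!: continuous_intros) (metis less_irrefl w_pos)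
  then have [measurable]: "(\<lambda>x. indicator A x *\<^sub>R (q x / sqrt (w x))) \<in> borel_measurable borel"
    by (rule borel_measurable_continuous_on_indicator[OF A])
  have "F \<in> borel_measurable lborel" "G \<in> borel_measurable lborel"
    unfolding F_def[abs_def] G_def[abs_def] by measurable
  then have "(\<integral>\<^sup>+x. F x * G x \<partial>lborel)\<^sup>2 \<le> (\<integral>\<^sup>+x. (F x)\<^sup>2 \<partial>lborel) * (\<integral>\<^sup>+x. (G x)\<^sup>2 \<partial>lborel)"
    by (rule Cauchy_Schwarz_nn_integral)
  moreover have "F x * G x = indicator A x * u x * ennreal (q x)" for x
  proof (cases "x \<in> A")
    case True
    then have "ennreal (sqrt (w x)) * ennreal (q x / sqrt (w x)) = ennreal (q x)"
      using w_pos[OF True] q_nonneg[OF True] by (simp add: ennreal_mult[symmetric])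
    then show ?thesis
      using True by (simp add: F_def G_def mult.assoc)
  qed (simp add: F_def G_def)
  moreover have "(F x)\<^sup>2 = indicator A x * ennreal (w x) * (u x)\<^sup>2" for x
  proof (cases "x \<in> A")
    case True
    then show ?thesis
      using w_pos[OF True] by (simp add: F_def power_mult_distrib ennreal_power mult.commute)
  qed (simp add: F_def)
  moreover have "(G x)\<^sup>2 = indicator A x * ennreal ((q x)\<^sup>2 / w x)" for x
  proof (cases "x \<in> A")
    case True
    then show ?thesis
      using w_pos[OF True] q_nonneg[OF True] by (simp add: G_def ennreal_power power_divide)
  qed (simp add: G_def)
  ultimately show ?thesis
    by simp
qed

section \<open>Planar derivatives\<close>

lemma frechet_derivative_eq_dx_dy:
  assumes "f differentiable (at z)"
  shows "frechet_derivative f (at z) w = of_real (Re w) * dx f z + of_real (Im w) * dy f z"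
proof -
  have "linear (frechet_derivative f (at z))"
    using assms by (simp add: frechet_derivative_works has_derivative_linear)
  then have "frechet_derivative f (at z) (Re w *\<^sub>R 1 + Im w *\<^sub>R \<i>)
      = Re w *\<^sub>R frechet_derivative f (at z) 1 + Im w *\<^sub>R frechet_derivative f (at z) \<i>"
    by (simp add: linear_add linear_scale)
  moreover have "Re w *\<^sub>R 1 + Im w *\<^sub>R \<i> = w"
    by (simp add: complex_eq_iff)
  ultimately show ?thesis
    by (simp add: dx_def dy_def scaleR_conv_of_real)
qed

lemma frechet_derivative_eq_wirtinger:
  assumes "f differentiable (at z)"
  shows "frechet_derivative f (at z) w = dz f z * w + dzbar f z * cnj w"
  using frechet_derivative_eq_dx_dy[OF assms]
  by (simp add: dz_def dzbar_def complex_eq_iff field_simps)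

lemma jac_eq_det: "jac f z = Re (dx f z) * Im (dy f z) - Im (dx f z) * Re (dy f z)"
  unfolding jac_def dz_def dzbar_def cmod_power2
  by (simp add: power2_eq_square field_simps)

lemma frechet_derivative_nonzero:
  assumes "f differentiable (at z)" and "jac f z \<noteq> 0" and "w \<noteq> 0"
  shows "frechet_derivative f (at z) w \<noteq> 0"
proof
  define L where "L = frechet_derivative f (at z) w"
  assume "L = 0"
  have L: "L = of_real (Re w) * dx f z + of_real (Im w) * dy f z"
    unfolding L_def by (rule frechet_derivative_eq_dx_dy[OF assms(1)])
  \<comment> \<open>Cramer's rule for the real 2x2 system \<open>L = 0\<close> with determinant \<open>jac f z\<close>\<close>
  have "Re w * jac f z = Im (dy f z) * Re L - Re (dy f z) * Im L"
       "Im w * jac f z = Re (dx f z) * Im L - Im (dx f z) * Re L"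
    by (simp_all add: L jac_eq_det algebra_simps)
  then have "w = 0"
    using \<open>L = 0\<close> \<open>jac f z \<noteq> 0\<close> by (simp add: complex_eq_iff)
  with \<open>w \<noteq> 0\<close> show False ..
qed

lemma dir_dil_eq_norm_frechet_derivative:
  assumes "jac f z > 0" and "f differentiable (at z)"
  shows "dir_dil f \<alpha> z = (cmod (frechet_derivative f (at z) (exp (\<i> * of_real \<alpha>))))\<^sup>2 / jac f z"
proof -
  let ?e = "exp (\<i> * complex_of_real \<alpha>)"
  define A where "A = dz f z"
  define B where "B = dzbar f z"
  have jac: "jac f z = (cmod A)\<^sup>2 - (cmod B)\<^sup>2"
    by (simp add: jac_def A_def B_def)
  then have "A \<noteq> 0"
    using assms(1) by auto
  have cnj_e: "cnj ?e = exp (- (\<i> * complex_of_real \<alpha>))"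
    by (simp add: exp_cnj)
  have e: "cnj ?e * ?e = 1"
    using exp_minus_inverse[of "\<i> * complex_of_real \<alpha>"] by (simp only: cnj_e mult.commute)
  have "exp (- 2 * \<i> * complex_of_real \<alpha>) = exp (2 * - (\<i> * complex_of_real \<alpha>))"
    by (simp add: algebra_simps)
  then have e_sq: "exp (- 2 * \<i> * complex_of_real \<alpha>) = cnj ?e ^ 2"
    by (simp only: cnj_e exp_double)
  have "1 + exp (- 2 * \<i> * complex_of_real \<alpha>) * cdil f z = cnj ?e * (A * ?e + B * cnj ?e) / A"
    using \<open>A \<noteq> 0\<close> e unfolding e_sq
    by (simp add: cdil_def A_def B_def field_simps power2_eq_square)
  also have "A * ?e + B * cnj ?e = frechet_derivative f (at z) ?e"
    by (simp add: frechet_derivative_eq_wirtinger[OF assms(2)] A_def B_def)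
  finally have "dir_dil f \<alpha> z
      = (cmod (frechet_derivative f (at z) ?e) / cmod A)\<^sup>2 / (1 - (cmod B / cmod A)\<^sup>2)"
    by (simp add: dir_dil_def norm_mult norm_divide cdil_def A_def B_def)
  also have "\<dots> = (cmod (frechet_derivative f (at z) ?e))\<^sup>2 / jac f z"
    using \<open>A \<noteq> 0\<close> by (simp add: jac field_simps power2_eq_square)
  finally show ?thesis .
qed

section \<open>Polar coordinates\<close>

definition polar :: "real \<Rightarrow> real \<Rightarrow> complex" where
  "polar r \<theta> = complex_of_real r * exp (\<i> * complex_of_real \<theta>)"

lemma norm_polar: "r \<ge> 0 \<Longrightarrow> cmod (polar r \<theta>) = r"
  by (simp add: polar_def norm_mult)

lemma polar_div_norm: "r > 0 \<Longrightarrow> polar r \<theta> / complex_of_real (cmod (polar r \<theta>)) = exp (\<i> * complex_of_real \<theta>)"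
  by (simp add: norm_polar) (simp add: polar_def)

lemma polar_in_annulus: "r \<in> {1..b} \<Longrightarrow> polar r \<theta> \<in> annulus b"
  by (simp add: annulus_def norm_polar)

lemma annulus_nonzero: "z \<in> annulus b \<Longrightarrow> z \<noteq> 0"
  by (auto simp: annulus_def)

lemma compact_annulus: "compact (annulus b)"
proof -
  have "annulus b = cball 0 b - ball 0 1"
    by (auto simp: annulus_def)
  then show ?thesis
    by (simp add: compact_diff)
qed

lemma continuous_on_polar: "continuous_on S (case_prod polar)"
  unfolding polar_def split_beta' by (intro continuous_intros)

lemma continuous_on_polar_radius:
  assumes "continuous_on (annulus b) h"
  shows "continuous_on {1..b} (\<lambda>r. h (polar r \<theta>))"
  by (rule continuous_on_compose2[OF assms]) (auto simp: polar_def intro!: continuous_intros polar_in_annulus[unfolded polar_def])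

lemma polar_image_annulus: "case_prod polar ` ({1..b} \<times> {0..<2*pi}) = annulus b"
proof
  show "case_prod polar ` ({1..b} \<times> {0..<2*pi}) \<subseteq> annulus b"
    by (auto intro: polar_in_annulus)
  show "annulus b \<subseteq> case_prod polar ` ({1..b} \<times> {0..<2*pi})"
  proof
    fix z assume "z \<in> annulus b"
    moreover have "0 \<le> Arg2pi z" "Arg2pi z < 2*pi" "z = polar (cmod z) (Arg2pi z)"
      using Arg2pi[of z] by (auto simp: is_Arg_def polar_def)
    ultimately show "z \<in> case_prod polar ` ({1..b} \<times> {0..<2*pi})"
      by (force simp: annulus_def)
  qed
qed

lemma Arg2pi_polar: "r > 0 \<Longrightarrow> 0 \<le> \<theta> \<Longrightarrow> \<theta> < 2*pi \<Longrightarrow> Arg2pi (polar r \<theta>) = \<theta>"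
  by (rule Arg2pi_unique[of r]) (auto simp: polar_def)

lemma inj_on_polar: "inj_on (case_prod polar) ({0<..} \<times> {0..<2*pi})"
proof (rule inj_onI, clarsimp)
  fix r \<theta> s \<phi> :: real
  assume "polar r \<theta> = polar s \<phi>" "0 < r" "0 < s" "0 \<le> \<theta>" "\<theta> < 2 * pi" "0 \<le> \<phi>" "\<phi> < 2 * pi"
  then show "r = s \<and> \<theta> = \<phi>"
    using norm_polar[of r \<theta>] norm_polar[of s \<phi>] Arg2pi_polar[of r \<theta>] Arg2pi_polar[of s \<phi>] by auto
qed

lemma has_derivative_polar:
  "(case_prod polar has_derivative
     (\<lambda>(s, t). (complex_of_real s + \<i> * complex_of_real (r * t)) * exp (\<i> * complex_of_real \<theta>))) (at (r, \<theta>))"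
proof -
  have "((\<lambda>t. \<i> * complex_of_real t) has_derivative (\<lambda>h. \<i> * complex_of_real h)) (at \<theta>)"
    by (auto intro!: derivative_eq_intros)
  moreover have "(exp has_derivative (\<lambda>h. exp (\<i> * complex_of_real \<theta>) * h)) (at (\<i> * complex_of_real \<theta>))"
    using DERIV_exp by (simp add: has_field_derivative_def)
  ultimately have "((\<lambda>t. exp (\<i> * complex_of_real t)) has_derivative
      (\<lambda>h. exp (\<i> * complex_of_real \<theta>) * (\<i> * complex_of_real h))) (at \<theta>)"
    using diff_chain_at by (fastforce simp: comp_def)
  moreover have "(snd has_derivative snd) (at (r, \<theta>))"
    by (rule has_derivative_snd[OF has_derivative_ident])
  ultimately have "((\<lambda>p. exp (\<i> * complex_of_real (snd p))) has_derivative
      (\<lambda>q. exp (\<i> * complex_of_real \<theta>) * (\<i> * complex_of_real (snd q)))) (at (r, \<theta>))"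
    using diff_chain_at[of snd snd "(r, \<theta>)"] by (simp add: comp_def)
  from has_derivative_mult[OF has_derivative_of_real[OF has_derivative_fst[OF has_derivative_ident]] this]
  show ?thesis
    by (simp add: polar_def case_prod_beta' algebra_simps)
qed

definition d_polar :: "(complex \<Rightarrow> complex) \<Rightarrow> real \<times> real \<Rightarrow> real \<times> real \<Rightarrow> complex" where
  "d_polar f = (\<lambda>(r, \<theta>) (s, t). frechet_derivative f (at (polar r \<theta>))
      ((complex_of_real s + \<i> * complex_of_real (r * t)) * exp (\<i> * complex_of_real \<theta>)))"

lemma has_derivative_comp_polar:
  assumes "f differentiable (at (polar r \<theta>))"
  shows "(f \<circ> case_prod polar has_derivative d_polar f (r, \<theta>)) (at (r, \<theta>))"
proof -
  have "(f has_derivative frechet_derivative f (at (polar r \<theta>))) (at (case_prod polar (r, \<theta>)))"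
    using assms by (simp add: frechet_derivative_works)
  from diff_chain_at[OF has_derivative_polar this] show ?thesis
    by (simp add: d_polar_def comp_def split_beta')
qed

lemma plane_det_d_polar:
  assumes "f differentiable (at (polar r \<theta>))"
  shows "plane_det (d_polar f (r, \<theta>)) = r * jac f (polar r \<theta>)"
proof -
  define X where "X = dx f (polar r \<theta>)"
  define Y where "Y = dy f (polar r \<theta>)"
  have polar_coords: "(complex_of_real s + \<i> * complex_of_real (r * t)) * exp (\<i> * complex_of_real \<theta>)
      = Complex (s * cos \<theta> - r * t * sin \<theta>) (s * sin \<theta> + r * t * cos \<theta>)" for s t
    by (simp add: complex_eq_iff Re_exp Im_exp)
  have "plane_det (d_polar f (r, \<theta>))
    = plane_det (\<lambda>(s, t). frechet_derivative f (at (polar r \<theta>))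
      (Complex (s * cos \<theta> - r * t * sin \<theta>) (s * sin \<theta> + r * t * cos \<theta>)))"
    by (simp only: d_polar_def prod.case polar_coords)
  also have "\<dots> = (cos \<theta> * Re X + sin \<theta> * Re Y) * (- r * sin \<theta> * Im X + r * cos \<theta> * Im Y)
      - (cos \<theta> * Im X + sin \<theta> * Im Y) * (- r * sin \<theta> * Re X + r * cos \<theta> * Re Y)"
    by (simp add: plane_det_def frechet_derivative_eq_dx_dy[OF assms] flip: X_def Y_def)
  also have "\<dots> = r * ((sin \<theta>)\<^sup>2 + (cos \<theta>)\<^sup>2) * (Re X * Im Y - Im X * Re Y)"
    by (simp only: power2_eq_square) algebra
  finally show ?thesis
    by (simp add: jac_eq_det X_def Y_def)
qed

lemma vector_derivative_radial_curve:
  assumes "f differentiable (at (polar t \<theta>))" and "t > 0" and "t \<in> {a..c}" and "a < c"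
  shows "vector_derivative (\<lambda>r. f (polar r \<theta>)) (at t within {a..c}) = rad_deriv f (polar t \<theta>)"
proof -
  have radial: "((\<lambda>r. polar r \<theta>) has_derivative (\<lambda>h. h *\<^sub>R exp (\<i> * complex_of_real \<theta>))) (at t)"
    unfolding polar_def by (auto intro!: derivative_eq_intros simp: scaleR_conv_of_real)
  have f: "(f has_derivative frechet_derivative f (at (polar t \<theta>))) (at (polar t \<theta>))"
    using assms(1) by (simp add: frechet_derivative_works)
  from diff_chain_at[OF radial f] have "((\<lambda>r. f (polar r \<theta>)) has_derivative
      (\<lambda>h. h *\<^sub>R frechet_derivative f (at (polar t \<theta>)) (exp (\<i> * complex_of_real \<theta>)))) (at t)"
    by (simp add: comp_def linear_scale[OF has_derivative_linear[OF f]])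
  then have "((\<lambda>r. f (polar r \<theta>)) has_vector_derivative rad_deriv f (polar t \<theta>)) (at t within {a..c})"
    unfolding rad_deriv_def polar_div_norm[OF \<open>t > 0\<close>] has_vector_derivative_def
    by (rule has_derivative_at_withinI)
  then show ?thesis
    using assms(3,4) vector_derivative_within_cbox[of a c t] by simp
qed

lemma ds_integral_radial_curve:
  assumes "\<And>t. t \<in> {a..c} \<Longrightarrow> f differentiable (at (polar t \<theta>))" and "0 < a" and "a < c"
  shows "ds_integral \<rho> (\<lambda>r. f (polar r \<theta>)) a c
    = (\<integral>\<^sup>+t. indicator {a..c} t * \<rho> (f (polar t \<theta>)) * ennreal (cmod (rad_deriv f (polar t \<theta>))) \<partial>lborel)"
  unfolding ds_integral_def using assms
  by (intro nn_integral_cong) (auto simp: vector_derivative_radial_curve split: split_indicator)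

section \<open>The 2-module of the radial family\<close>

lemma modulus2_eq_extremal:
  assumes "admissible2 \<Gamma> \<rho>\<^sub>0"
    and "\<And>\<rho>. admissible2 \<Gamma> \<rho> \<Longrightarrow> (\<integral>\<^sup>+z. (\<rho>\<^sub>0 z)\<^sup>2 \<partial>lborel) \<le> (\<integral>\<^sup>+z. (\<rho> z)\<^sup>2 \<partial>lborel)"
  shows "modulus2 \<Gamma> = (\<integral>\<^sup>+z. (\<rho>\<^sub>0 z)\<^sup>2 \<partial>lborel)"
  unfolding modulus2_def using assms by (intro antisym INF_lower INF_greatest) auto

locale annulus_C1_homeomorphism =
  fixes f g :: "complex \<Rightarrow> complex" and b :: real
  assumes b_gt_1: "b > 1"
    and homeo: "homeomorphism (annulus b) (f ` annulus b) f g"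
    and differentiable: "\<And>z. z \<in> annulus b \<Longrightarrow> f differentiable (at z)"
    and continuous_dx: "continuous_on (annulus b) (dx f)"
    and continuous_dy: "continuous_on (annulus b) (dy f)"
    and jac_pos: "\<And>z. z \<in> annulus b \<Longrightarrow> jac f z > 0"
begin

text \<open>The paper's \<open>D\<^sub>f\<^sub>,\<^sub>\<theta>(z) = |f\<^sub>r|\<^sup>2 / J\<^sub>f\<close> with \<open>\<theta>\<close> the argument of \<open>z\<close>.\<close>
definition radial_dil :: "complex \<Rightarrow> real" where
  "radial_dil z = (cmod (rad_deriv f z))\<^sup>2 / jac f z"

text \<open>\<open>radial_dil_integral\<close> indexed by the direction \<open>u = e\<^sup>i\<^sup>\<theta>\<close> instead of \<open>\<theta>\<close>: this makes it
  continuous on the unit circle, whereas \<open>rho0\<close> reaches \<open>\<theta>\<close> through the discontinuous \<open>Arg\<close>.\<close>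
definition radial_dil_integral_dir :: "complex \<Rightarrow> real" where
  "radial_dil_integral_dir u = integral {1..b} (\<lambda>r. radial_dil (complex_of_real r * u) / r)"

lemma continuous_on_f: "continuous_on (annulus b) f"
  and continuous_on_g: "continuous_on (f ` annulus b) g"
  and g_f: "z \<in> annulus b \<Longrightarrow> g (f z) = z"
  using homeo by (simp_all add: homeomorphism_def)

lemma image_annulus_borel: "f ` annulus b \<in> sets borel"
  using compact_continuous_image[OF continuous_on_f compact_annulus] by (simp add: borel_compact)

lemma rad_deriv_eq_dx_dy:
  "z \<in> annulus b \<Longrightarrow> rad_deriv f z = of_real (Re z / cmod z) * dx f z + of_real (Im z / cmod z) * dy f z"
  unfolding rad_deriv_def
  by (simp add: frechet_derivative_eq_dx_dy[OF differentiable] Re_divide_of_real Im_divide_of_real)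

lemma continuous_on_jac: "continuous_on (annulus b) (jac f)"
  unfolding jac_eq_det[abs_def] using continuous_dx continuous_dy by (intro continuous_intros)

lemma continuous_on_rad_deriv: "continuous_on (annulus b) (rad_deriv f)"
proof -
  have "continuous_on (annulus b) (\<lambda>z. of_real (Re z / cmod z) * dx f z + of_real (Im z / cmod z) * dy f z)"
    using continuous_dx continuous_dy annulus_nonzero by (intro continuous_intros) auto
  then show ?thesis
    by (rule continuous_on_eq) (simp add: rad_deriv_eq_dx_dy)
qed

lemma rad_deriv_nonzero: "z \<in> annulus b \<Longrightarrow> rad_deriv f z \<noteq> 0"
  unfolding rad_deriv_def
  using jac_pos[of z] annulus_nonzero[of z b] by (intro frechet_derivative_nonzero differentiable) auto

lemma radial_dil_pos: "z \<in> annulus b \<Longrightarrow> radial_dil z > 0"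
  using rad_deriv_nonzero jac_pos by (simp add: radial_dil_def)

lemma continuous_on_radial_dil: "continuous_on (annulus b) radial_dil"
  unfolding radial_dil_def[abs_def] using continuous_on_rad_deriv continuous_on_jac
  by (intro continuous_intros) (auto dest: jac_pos)

lemma rad_deriv_norm_sq: "z \<in> annulus b \<Longrightarrow> (cmod (rad_deriv f z))\<^sup>2 = radial_dil z * jac f z"
  using jac_pos[of z] by (simp add: radial_dil_def)

lemma dir_dil_eq_radial_dil:
  "z \<in> annulus b \<Longrightarrow> exp (\<i> * complex_of_real \<alpha>) = z / complex_of_real (cmod z) \<Longrightarrow> dir_dil f \<alpha> z = radial_dil z"
  using dir_dil_eq_norm_frechet_derivative[OF jac_pos differentiable]
  by (simp add: radial_dil_def rad_deriv_def)

lemma radial_dil_integral_eq_dir: "radial_dil_integral f b \<theta> = radial_dil_integral_dir (exp (\<i> * complex_of_real \<theta>))"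
  unfolding radial_dil_integral_def radial_dil_integral_dir_def
proof (intro integral_cong)
  fix r assume "r \<in> {1..b}"
  then show "dir_dil f \<theta> (complex_of_real r * exp (\<i> * complex_of_real \<theta>)) / r
      = radial_dil (complex_of_real r * exp (\<i> * complex_of_real \<theta>)) / r"
    using dir_dil_eq_radial_dil[OF polar_in_annulus polar_div_norm[symmetric]] by (simp add: polar_def)
qed

lemma exp_Arg: "z \<noteq> 0 \<Longrightarrow> exp (\<i> * complex_of_real (Arg z)) = z / complex_of_real (cmod z)"
  by (metis Arg_eq nonzero_mult_div_cancel_left norm_eq_zero of_real_eq_0_iff)

lemma radial_dil_integral_Arg:
  "z \<in> annulus b \<Longrightarrow> radial_dil_integral f b (Arg z) = radial_dil_integral_dir (z / complex_of_real (cmod z))"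
  by (simp add: radial_dil_integral_eq_dir exp_Arg annulus_nonzero)

lemma has_integral_radial_dil_integral_dir:
  assumes "cmod u = 1"
  shows "((\<lambda>r. radial_dil (complex_of_real r * u) / r) has_integral radial_dil_integral_dir u) {1..b}"
proof -
  have "continuous_on {1..b} (\<lambda>r. radial_dil (complex_of_real r * u))"
    using assms by (intro continuous_on_compose2[OF continuous_on_radial_dil] continuous_intros)
      (auto simp: annulus_def norm_mult)
  then have "continuous_on {1..b} (\<lambda>r. radial_dil (complex_of_real r * u) / r)"
    by (intro continuous_intros) auto
  then show ?thesis
    unfolding radial_dil_integral_dir_def by (intro integrable_integral integrable_continuous_interval)
qed

lemma radial_dil_integral_dir_pos:
  assumes "cmod u = 1"
  shows "radial_dil_integral_dir u > 0"
proof -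
  have "annulus b \<noteq> {}"
    using b_gt_1 polar_in_annulus[of 1 b 0] by auto
  then obtain z0 where "z0 \<in> annulus b" and min: "\<And>z. z \<in> annulus b \<Longrightarrow> radial_dil z0 \<le> radial_dil z"
    using continuous_attains_inf[OF compact_annulus _ continuous_on_radial_dil] by blast
  have "radial_dil z0 / b \<le> radial_dil (complex_of_real r * u) / r" if "r \<in> {1..b}" for r
  proof -
    have "complex_of_real r * u \<in> annulus b"
      using that assms by (simp add: annulus_def norm_mult)
    then show ?thesis
      using that min radial_dil_pos \<open>z0 \<in> annulus b\<close>
      by (intro frac_le) (auto intro: less_imp_le)
  qed
  then have "radial_dil z0 / b * (b - 1) \<le> radial_dil_integral_dir u"
    using has_integral_le[OF has_integral_const_real[of "radial_dil z0 / b" 1 b] has_integral_radial_dil_integral_dir[OF assms]]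
      b_gt_1 by (simp add: mult.commute)
  moreover have "radial_dil z0 / b * (b - 1) > 0"
    using radial_dil_pos[OF \<open>z0 \<in> annulus b\<close>] b_gt_1 by simp
  ultimately show ?thesis
    by linarith
qed

lemma continuous_on_radial_dil_integral_dir: "continuous_on (sphere 0 1) radial_dil_integral_dir"
proof -
  have "continuous_on (sphere 0 1 \<times> {1..b}) (\<lambda>p. radial_dil (complex_of_real (snd p) * fst p))"
    by (intro continuous_on_compose2[OF continuous_on_radial_dil] continuous_intros)
      (auto simp: annulus_def norm_mult)
  then have "continuous_on (sphere 0 1 \<times> cbox 1 b) (\<lambda>p. radial_dil (complex_of_real (snd p) * fst p) / snd p)"
    by (auto intro!: continuous_intros)
  then have "continuous_on (sphere 0 1 \<times> cbox 1 b) (\<lambda>(u, r). radial_dil (complex_of_real r * u) / r)"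
    by (simp add: split_beta')
  then show ?thesis
    unfolding radial_dil_integral_dir_def cbox_interval[symmetric] by (rule integral_continuous_on_param)
qed

lemma radial_dil_integral_pos: "radial_dil_integral f b \<theta> > 0"
  by (simp add: radial_dil_integral_eq_dir radial_dil_integral_dir_pos)

lemma continuous_radial_dil_integral: "continuous_on S (radial_dil_integral f b)"
  unfolding radial_dil_integral_eq_dir[abs_def]
  by (rule continuous_on_compose2[OF continuous_on_radial_dil_integral_dir]) (auto intro!: continuous_intros)

lemma nn_integral_radial_dil:
  assumes "c \<ge> 0"
  shows "(\<integral>\<^sup>+r. ennreal (c * (radial_dil (polar r \<theta>) / r)) * indicator {1..b} r \<partial>lborel)
    = ennreal (c * radial_dil_integral f b \<theta>)"
proof (rule nn_integral_has_integral_lebesgue')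
  show "((\<lambda>r. c * (radial_dil (polar r \<theta>) / r)) has_integral c * radial_dil_integral f b \<theta>) {1..b}"
    using has_integral_radial_dil_integral_dir[of "exp (\<i> * complex_of_real \<theta>)"]
    by (intro has_integral_mult_right) (simp add: radial_dil_integral_eq_dir polar_def)
  show "0 \<le> c * (radial_dil (polar r \<theta>) / r)" if "r \<in> {1..b}" for r
    using that assms radial_dil_pos[OF polar_in_annulus[OF that]] by (simp add: less_imp_le)
qed

lemma inj_on_f: "inj_on f (annulus b)"
  using g_f by (rule inj_on_inverseI)

lemma nn_integral_image_annulus_polar:
  assumes h[measurable]: "h \<in> borel_measurable borel"
  shows "(\<integral>\<^sup>+w. indicator (f ` annulus b) w * h w \<partial>lborel)
    = (\<integral>\<^sup>+p. indicator ({1..b} \<times> {0..<2*pi}) p * ennreal (fst p * jac f (case_prod polar p))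
        * h (f (case_prod polar p)) \<partial>lborel)"
proof -
  define S where "S = {1..b} \<times> {0..<2*pi}"
  define w where "w p = fst p * jac f (case_prod polar p)" for p
  have S[measurable]: "S \<in> sets borel"
    unfolding S_def borel_prod[symmetric] by (intro pair_measureI) auto
  have S_annulus: "p \<in> S \<Longrightarrow> case_prod polar p \<in> annulus b" for p
    by (auto simp: S_def polar_in_annulus)
  have image_S: "(f \<circ> case_prod polar) ` S = f ` annulus b"
    by (simp only: S_def image_comp[symmetric] polar_image_annulus)
  have det: "plane_det (d_polar f p) = w p" "w p \<ge> 0" if "p \<in> S" for p
    using that S_annulus[OF that] plane_det_d_polar[OF differentiable] jac_pos
    by (auto simp: w_def S_def intro!: mult_nonneg_nonneg less_imp_le)
  obtain J where J: "\<And>z. z \<in> annulus b \<Longrightarrow> jac f z \<le> J"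
    using continuous_attains_sup[OF compact_annulus _ continuous_on_jac] polar_in_annulus[of 1 b 0] b_gt_1
    by fastforce
  have "continuous_on S w"
    unfolding w_def using S_annulus
    by (intro continuous_intros continuous_on_compose2[OF continuous_on_jac continuous_on_polar]) auto
  then have "(\<lambda>p. indicator S p *\<^sub>R w p) \<in> borel_measurable borel"
    by (rule borel_measurable_continuous_on_indicator[OF S])
  moreover have "(\<lambda>p. indicator S p * \<bar>plane_det (d_polar f p)\<bar>) = (\<lambda>p. indicator S p *\<^sub>R w p)"
    using det by (auto simp: fun_eq_iff split: split_indicator)
  ultimately have "(\<lambda>p. indicator S p * \<bar>plane_det (d_polar f p)\<bar>) \<in> borel_measurable borel"
    by simp
  then have "(\<integral>\<^sup>+w. indicator ((f \<circ> case_prod polar) ` S) w * h w \<partial>lborel)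
      = (\<integral>\<^sup>+p. indicator S p * ennreal \<bar>plane_det (d_polar f p)\<bar> * h ((f \<circ> case_prod polar) p) \<partial>lborel)"
  proof (rule nn_integral_change_of_variables_plane[OF S, rotated 5])
    show "(f \<circ> case_prod polar) ` S \<in> sets borel"
      using image_annulus_borel by (simp only: image_S)
    show "(f \<circ> case_prod polar has_derivative d_polar f p) (at p within S)" if "p \<in> S" for p
      using S_annulus[OF that] differentiable
      by (cases p) (simp add: has_derivative_comp_polar has_derivative_at_withinI)
    show "inj_on (f \<circ> case_prod polar) S"
      unfolding S_def using inj_on_f polar_image_annulus inj_on_polar
      by (intro comp_inj_on) (auto intro: inj_on_subset)
    show "bounded S"
      unfolding S_def by (rule bounded_subset[of "{1..b} \<times> {0..2*pi}"]) (auto intro: bounded_Times)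
    show "\<bar>plane_det (d_polar f p)\<bar> \<le> b * J" if "p \<in> S" for p
      using that det[OF that] J[OF S_annulus[OF that]] jac_pos[OF S_annulus[OF that]]
      by (auto simp: w_def S_def intro!: mult_mono)
  qed fact
  also have "\<dots> = (\<integral>\<^sup>+p. indicator S p * ennreal (w p) * h (f (case_prod polar p)) \<partial>lborel)"
    using det by (intro nn_integral_cong) (simp split: split_indicator)
  finally show ?thesis
    unfolding image_S[symmetric] S_def w_def .
qed

lemma nn_integral_image_annulus:
  assumes h[measurable]: "h \<in> borel_measurable borel"
  shows "(\<integral>\<^sup>+w. indicator (f ` annulus b) w * h w \<partial>lborel)
    = (\<integral>\<^sup>+\<theta>. indicator {0..<2*pi} \<theta> *
        (\<integral>\<^sup>+r. indicator {1..b} r * ennreal (r * jac f (polar r \<theta>)) * h (f (polar r \<theta>)) \<partial>lborel) \<partial>lborel)"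
proof -
  define S where "S = {1..b} \<times> {0..<2*pi}"
  have S[measurable]: "S \<in> sets borel"
    unfolding S_def borel_prod[symmetric] by (intro pair_measureI) auto
  have S_annulus: "p \<in> S \<Longrightarrow> case_prod polar p \<in> annulus b" for p
    by (auto simp: S_def polar_in_annulus)
  \<comment> \<open>the integrand, made Borel measurable on all of \<open>\<real>\<^sup>2\<close> for Fubini\<close>
  define G where "G p = ennreal (indicator S p *\<^sub>R (fst p * jac f (case_prod polar p)))
      * h (indicator S p *\<^sub>R f (case_prod polar p))" for p
  have "continuous_on S (\<lambda>p. fst p * jac f (case_prod polar p))"
    using S_annulus by (intro continuous_intros continuous_on_compose2[OF continuous_on_jac continuous_on_polar]) auto
  then have [measurable]: "(\<lambda>p. indicator S p *\<^sub>R (fst p * jac f (case_prod polar p))) \<in> borel_measurable borel"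
    by (rule borel_measurable_continuous_on_indicator[OF S])
  have "continuous_on S (\<lambda>p. f (case_prod polar p))"
    using S_annulus by (intro continuous_on_compose2[OF continuous_on_f continuous_on_polar]) auto
  then have [measurable]: "(\<lambda>p. indicator S p *\<^sub>R f (case_prod polar p)) \<in> borel_measurable borel"
    by (rule borel_measurable_continuous_on_indicator[OF S])
  then have G_measurable: "G \<in> borel_measurable (lborel \<Otimes>\<^sub>M lborel)"
    unfolding G_def[abs_def] lborel_prod by measurable
  have "(\<integral>\<^sup>+w. indicator (f ` annulus b) w * h w \<partial>lborel) = (\<integral>\<^sup>+p. G p \<partial>(lborel \<Otimes>\<^sub>M lborel))"
    unfolding nn_integral_image_annulus_polar[OF h] lborel_prod S_def[symmetric] using S_annulus jac_pos
    by (intro nn_integral_cong) (auto simp: G_def S_def split: split_indicator)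
  also have "\<dots> = (\<integral>\<^sup>+\<theta>. (\<integral>\<^sup>+r. G (r, \<theta>) \<partial>lborel) \<partial>lborel)"
    by (rule lborel_pair.nn_integral_snd[symmetric, OF G_measurable])
  also have "\<dots> = (\<integral>\<^sup>+\<theta>. indicator {0..<2*pi} \<theta> *
        (\<integral>\<^sup>+r. indicator {1..b} r * ennreal (r * jac f (polar r \<theta>)) * h (f (polar r \<theta>)) \<partial>lborel) \<partial>lborel)"
    by (intro nn_integral_cong) (auto simp: G_def S_def split: split_indicator intro!: nn_integral_cong)
  finally show ?thesis .
qed

lemma ds_integral_radial_image:
  "ds_integral \<rho> (\<lambda>r. f (complex_of_real r * exp (\<i> * complex_of_real \<theta>))) 1 b
    = (\<integral>\<^sup>+t. indicator {1..b} t * \<rho> (f (polar t \<theta>)) * ennreal (cmod (rad_deriv f (polar t \<theta>))) \<partial>lborel)"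
  using ds_integral_radial_curve[of 1 b f \<theta> \<rho>] b_gt_1 differentiable polar_in_annulus
  by (simp add: polar_def)

lemma borel_measurable_along_radius:
  fixes \<rho> :: "complex \<Rightarrow> ennreal"
  assumes [measurable]: "\<rho> \<in> borel_measurable borel"
  shows "(\<lambda>t. indicator {1..b} t * \<rho> (f (polar t \<theta>))) \<in> borel_measurable borel"
proof -
  have [measurable]: "(\<lambda>t. indicator {1..b} t *\<^sub>R f (polar t \<theta>)) \<in> borel_measurable borel"
    by (intro borel_measurable_continuous_on_indicator continuous_on_polar_radius continuous_on_f) simp
  have "(\<lambda>t. indicator {1..b} t * \<rho> (indicator {1..b} t *\<^sub>R f (polar t \<theta>))) \<in> borel_measurable borel"
    by measurable
  then show ?thesis
    by (rule measurable_cong[THEN iffD1, rotated]) (simp split: split_indicator)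
qed

lemma inverse_radial_dil_integral_le_radial_area:
  fixes \<rho> :: "complex \<Rightarrow> ennreal"
  assumes \<rho>[measurable]: "\<rho> \<in> borel_measurable borel"
    and admissible: "1 \<le> (\<integral>\<^sup>+t. indicator {1..b} t * \<rho> (f (polar t \<theta>)) * ennreal (cmod (rad_deriv f (polar t \<theta>))) \<partial>lborel)"
  shows "ennreal (inverse (radial_dil_integral f b \<theta>))
    \<le> (\<integral>\<^sup>+r. indicator {1..b} r * ennreal (r * jac f (polar r \<theta>)) * (\<rho> (f (polar r \<theta>)))\<^sup>2 \<partial>lborel)"
    (is "_ \<le> ?X")
proof -
  let ?I = "radial_dil_integral f b \<theta>"
  have "(cmod (rad_deriv f (polar r \<theta>)))\<^sup>2 / (r * jac f (polar r \<theta>)) = 1 * (radial_dil (polar r \<theta>) / r)"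
    if "r \<in> {1..b}" for r
    using jac_pos[OF polar_in_annulus[OF that, of \<theta>]]
    by (simp add: rad_deriv_norm_sq[OF polar_in_annulus[OF that]])
  then have "(\<integral>\<^sup>+r. indicator {1..b} r * ennreal ((cmod (rad_deriv f (polar r \<theta>)))\<^sup>2 / (r * jac f (polar r \<theta>))) \<partial>lborel)
      = ennreal (1 * ?I)"
    by (subst nn_integral_radial_dil[symmetric])
      (auto intro!: nn_integral_cong simp: mult.commute split: split_indicator)
  moreover have "(\<integral>\<^sup>+r. indicator {1..b} r * \<rho> (f (polar r \<theta>)) * ennreal (cmod (rad_deriv f (polar r \<theta>))) \<partial>lborel)\<^sup>2
      \<le> ?X * (\<integral>\<^sup>+r. indicator {1..b} r * ennreal ((cmod (rad_deriv f (polar r \<theta>)))\<^sup>2 / (r * jac f (polar r \<theta>))) \<partial>lborel)"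
    using jac_pos[OF polar_in_annulus]
    by (intro weighted_Cauchy_Schwarz_nn_integral borel_measurable_along_radius \<rho>
        continuous_intros continuous_on_polar_radius continuous_on_jac continuous_on_rad_deriv)
      (auto intro: mult_pos_pos)
  ultimately have "1 \<le> ?X * ennreal ?I"
    using one_le_power[OF admissible, of 2] by simp
  then have "ennreal (inverse ?I) * 1 \<le> ennreal (inverse ?I) * (?X * ennreal ?I)"
    by (rule mult_left_mono) simp
  also have "\<dots> = ?X"
    using radial_dil_integral_pos[of \<theta>]
    by (simp add: ennreal_mult'[symmetric] mult.left_commute[of "ennreal _"] mult.assoc)
  finally show ?thesis
    by simp
qed

lemma rho0_polar:
  assumes "r \<in> {1..b}"
  shows "rho0 f g b (f (polar r \<theta>))
    = ennreal (radial_dil (polar r \<theta>) / r / (cmod (rad_deriv f (polar r \<theta>)) * radial_dil_integral f b \<theta>))"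
proof -
  have z: "polar r \<theta> \<in> annulus b"
    using polar_in_annulus[OF assms] .
  have "radial_dil_integral f b (Arg (polar r \<theta>)) = radial_dil_integral_dir (exp (\<i> * complex_of_real \<theta>))"
    using assms by (simp only: radial_dil_integral_Arg[OF z]) (simp add: polar_div_norm)
  then have "radial_dil_integral f b (Arg (polar r \<theta>)) = radial_dil_integral f b \<theta>"
    by (simp add: radial_dil_integral_eq_dir)
  moreover have "dir_dil f (Arg (polar r \<theta>)) (polar r \<theta>) = radial_dil (polar r \<theta>)"
    using z by (intro dir_dil_eq_radial_dil exp_Arg annulus_nonzero)
  ultimately show ?thesis
    using z assms by (simp add: rho0_def Let_def g_f norm_polar)
qed

lemma rho0_mult_norm_rad_deriv:
  assumes "r \<in> {1..b}"
  shows "rho0 f g b (f (polar r \<theta>)) * ennreal (cmod (rad_deriv f (polar r \<theta>)))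
    = ennreal (inverse (radial_dil_integral f b \<theta>) * (radial_dil (polar r \<theta>) / r))"
proof -
  have "0 \<le> radial_dil (polar r \<theta>) / r / (cmod (rad_deriv f (polar r \<theta>)) * radial_dil_integral f b \<theta>)"
    using assms radial_dil_pos[OF polar_in_annulus[OF assms, of \<theta>]] radial_dil_integral_pos[of \<theta>]
    by (auto intro!: divide_nonneg_nonneg mult_nonneg_nonneg less_imp_le)
  then show ?thesis
    using assms rad_deriv_nonzero[OF polar_in_annulus[OF assms, of \<theta>]]
    by (simp add: rho0_polar ennreal_mult[symmetric] field_simps)
qed

lemma radial_length_rho0: 
  "(\<integral>\<^sup>+t. indicator {1..b} t * rho0 f g b (f (polar t \<theta>)) * ennreal (cmod (rad_deriv f (polar t \<theta>))) \<partial>lborel) = 1"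
proof -
  have "(\<integral>\<^sup>+t. indicator {1..b} t * rho0 f g b (f (polar t \<theta>)) * ennreal (cmod (rad_deriv f (polar t \<theta>))) \<partial>lborel)
      = (\<integral>\<^sup>+r. ennreal (inverse (radial_dil_integral f b \<theta>) * (radial_dil (polar r \<theta>) / r)) * indicator {1..b} r \<partial>lborel)"
    by (intro nn_integral_cong) (simp add: rho0_mult_norm_rad_deriv split: split_indicator)
  also have "\<dots> = ennreal (inverse (radial_dil_integral f b \<theta>) * radial_dil_integral f b \<theta>)"
    using radial_dil_integral_pos[of \<theta>] by (intro nn_integral_radial_dil) simp
  finally show ?thesis
    using radial_dil_integral_pos[of \<theta>] by simp
qed

lemma radial_area_rho0:
  "(\<integral>\<^sup>+r. indicator {1..b} r * ennreal (r * jac f (polar r \<theta>)) * (rho0 f g b (f (polar r \<theta>)))\<^sup>2 \<partial>lborel)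
    = ennreal (inverse (radial_dil_integral f b \<theta>))"
proof -
  let ?I = "radial_dil_integral f b \<theta>"
  have "ennreal (r * jac f (polar r \<theta>)) * (rho0 f g b (f (polar r \<theta>)))\<^sup>2
      = ennreal (inverse ?I ^ 2 * (radial_dil (polar r \<theta>) / r))" if "r \<in> {1..b}" for r
  proof -
    have z: "polar r \<theta> \<in> annulus b"
      using polar_in_annulus[OF that] .
    have "r * jac f (polar r \<theta>) * (radial_dil (polar r \<theta>) / r / (cmod (rad_deriv f (polar r \<theta>)) * ?I))\<^sup>2
        = inverse ?I ^ 2 * (radial_dil (polar r \<theta>) / r)"
      unfolding power_divide power_mult_distrib rad_deriv_norm_sq[OF z]
      using that radial_dil_pos[OF z] jac_pos[OF z] radial_dil_integral_pos[of \<theta>]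
      by (simp add: field_simps power2_eq_square)
    moreover have "0 \<le> radial_dil (polar r \<theta>) / r / (cmod (rad_deriv f (polar r \<theta>)) * ?I)"
      using that radial_dil_pos[OF z] radial_dil_integral_pos[of \<theta>]
      by (auto intro!: divide_nonneg_nonneg mult_nonneg_nonneg less_imp_le)
    ultimately show ?thesis
      using that jac_pos[OF z] by (simp add: rho0_polar ennreal_power ennreal_mult[symmetric])
  qed
  then have "(\<integral>\<^sup>+r. indicator {1..b} r * ennreal (r * jac f (polar r \<theta>)) * (rho0 f g b (f (polar r \<theta>)))\<^sup>2 \<partial>lborel)
      = (\<integral>\<^sup>+r. ennreal (inverse ?I ^ 2 * (radial_dil (polar r \<theta>) / r)) * indicator {1..b} r \<partial>lborel)"
    by (intro nn_integral_cong) (simp add: mult.assoc mult.commute split: split_indicator)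
  also have "\<dots> = ennreal (inverse ?I ^ 2 * ?I)"
    by (intro nn_integral_radial_dil) simp
  finally show ?thesis
    using radial_dil_integral_pos[of \<theta>] by (simp add: power2_eq_square)
qed

lemma borel_measurable_rho0: "rho0 f g b \<in> borel_measurable borel"
proof -
  define R where
    "R z = radial_dil z / cmod z / (cmod (rad_deriv f z) * radial_dil_integral_dir (z / complex_of_real (cmod z)))" for z
  have unit: "cmod (z / complex_of_real (cmod z)) = 1" if "z \<in> annulus b" for z
    using annulus_nonzero[OF that] by (simp add: norm_divide)
  have "continuous_on (annulus b) (\<lambda>z. radial_dil_integral_dir (z / complex_of_real (cmod z)))"
    using unit annulus_nonzero
    by (intro continuous_on_compose2[OF continuous_on_radial_dil_integral_dir] continuous_intros) auto
  then have "continuous_on (annulus b) R"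
    unfolding R_def using annulus_nonzero rad_deriv_nonzero radial_dil_integral_dir_pos[OF unit]
    by (intro continuous_intros continuous_on_radial_dil continuous_on_rad_deriv) (fastforce+)
  then have "continuous_on (f ` annulus b) (\<lambda>w. R (g w))"
    using g_f by (intro continuous_on_compose2[OF _ continuous_on_g]) auto
  then have [measurable]: "(\<lambda>w. indicator (f ` annulus b) w *\<^sub>R R (g w)) \<in> borel_measurable borel"
    by (rule borel_measurable_continuous_on_indicator[OF image_annulus_borel])
  have "rho0 f g b w = ennreal (indicator (f ` annulus b) w *\<^sub>R R (g w))" for w
  proof (cases "w \<in> f ` annulus b")
    case True
    then obtain z where "z \<in> annulus b" "w = f z"
      by blast
    then show ?thesis
      by (simp add: rho0_def Let_def R_def g_f dir_dil_eq_radial_dil exp_Arg annulus_nonzero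
          radial_dil_integral_Arg)
  qed (simp add: rho0_def)
  then have rho0_eq: "rho0 f g b = (\<lambda>w. ennreal (indicator (f ` annulus b) w *\<^sub>R R (g w)))" ..
  show ?thesis
    unfolding rho0_eq by measurable
qed

lemma nn_integral_inverse_radial_dil_integral:
  "(\<integral>\<^sup>+\<theta>. indicator {0..<2*pi} \<theta> * ennreal (inverse (radial_dil_integral f b \<theta>)) \<partial>lborel)
    = ennreal (integral {0..2*pi} (\<lambda>\<theta>. inverse (radial_dil_integral f b \<theta>)))"
proof -
  have "continuous_on {0..2*pi} (\<lambda>\<theta>. inverse (radial_dil_integral f b \<theta>))"
    by (intro continuous_intros continuous_radial_dil_integral) (metis less_irrefl radial_dil_integral_pos)
  then have "((\<lambda>\<theta>. inverse (radial_dil_integral f b \<theta>)) has_integral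
      integral {0..2*pi} (\<lambda>\<theta>. inverse (radial_dil_integral f b \<theta>))) {0..2*pi}"
    by (intro integrable_integral integrable_continuous_interval)
  then have "(\<integral>\<^sup>+\<theta>. ennreal (inverse (radial_dil_integral f b \<theta>)) * indicator {0..2*pi} \<theta> \<partial>lborel)
      = ennreal (integral {0..2*pi} (\<lambda>\<theta>. inverse (radial_dil_integral f b \<theta>)))"
    using radial_dil_integral_pos by (intro nn_integral_has_integral_lebesgue') (auto intro: less_imp_le)
  moreover have "AE \<theta> in lborel. indicator {0..<2*pi} \<theta> * ennreal (inverse (radial_dil_integral f b \<theta>))
      = ennreal (inverse (radial_dil_integral f b \<theta>)) * indicator {0..2*pi} \<theta>"
    using AE_lborel_singleton[of "2*pi"] by eventually_elim (auto split: split_indicator)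
  ultimately show ?thesis
    by (simp add: nn_integral_cong_AE)
qed

lemma admissible2_rho0: "admissible2 (radial_image_family f b) (rho0 f g b)"
  unfolding admissible2_def radial_image_family_def
  by (auto simp: borel_measurable_rho0 ds_integral_radial_image radial_length_rho0)

lemma nn_integral_rho0_sq:
  "(\<integral>\<^sup>+w. (rho0 f g b w)\<^sup>2 \<partial>lborel) = ennreal (integral {0..2*pi} (\<lambda>\<theta>. inverse (radial_dil_integral f b \<theta>)))"
proof -
  have "(\<integral>\<^sup>+w. (rho0 f g b w)\<^sup>2 \<partial>lborel) = (\<integral>\<^sup>+w. indicator (f ` annulus b) w * (rho0 f g b w)\<^sup>2 \<partial>lborel)"
    by (intro nn_integral_cong) (simp add: rho0_def split: split_indicator)
  also have "\<dots> = ennreal (integral {0..2*pi} (\<lambda>\<theta>. inverse (radial_dil_integral f b \<theta>)))"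
    using borel_measurable_rho0
    by (simp add: nn_integral_image_annulus radial_area_rho0 nn_integral_inverse_radial_dil_integral)
  finally show ?thesis .
qed

lemma nn_integral_sq_ge_of_admissible2:
  assumes "admissible2 (radial_image_family f b) \<rho>"
  shows "ennreal (integral {0..2*pi} (\<lambda>\<theta>. inverse (radial_dil_integral f b \<theta>))) \<le> (\<integral>\<^sup>+w. (\<rho> w)\<^sup>2 \<partial>lborel)"
proof -
  have [measurable]: "\<rho> \<in> borel_measurable borel"
    using assms by (simp add: admissible2_def)
  have "1 \<le> (\<integral>\<^sup>+t. indicator {1..b} t * \<rho> (f (polar t \<theta>)) * ennreal (cmod (rad_deriv f (polar t \<theta>))) \<partial>lborel)"
    if "\<theta> \<in> {0..<2*pi}" for \<theta>
  proof -
    have "((\<lambda>r. f (complex_of_real r * exp (\<i> * complex_of_real \<theta>))), 1, b) \<in> radial_image_family f b"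
      using that by (auto simp: radial_image_family_def)
    with assms show ?thesis
      by (auto simp: admissible2_def ds_integral_radial_image)
  qed
  then have "ennreal (integral {0..2*pi} (\<lambda>\<theta>. inverse (radial_dil_integral f b \<theta>)))
      \<le> (\<integral>\<^sup>+\<theta>. indicator {0..<2*pi} \<theta> *
        (\<integral>\<^sup>+r. indicator {1..b} r * ennreal (r * jac f (polar r \<theta>)) * (\<rho> (f (polar r \<theta>)))\<^sup>2 \<partial>lborel) \<partial>lborel)"
    unfolding nn_integral_inverse_radial_dil_integral[symmetric]
    by (intro nn_integral_mono) (simp add: inverse_radial_dil_integral_le_radial_area split: split_indicator)
  also have "\<dots> = (\<integral>\<^sup>+w. indicator (f ` annulus b) w * (\<rho> w)\<^sup>2 \<partial>lborel)"
    by (simp add: nn_integral_image_annulus)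
  also have "\<dots> \<le> (\<integral>\<^sup>+w. (\<rho> w)\<^sup>2 \<partial>lborel)"
    by (intro nn_integral_mono) (simp split: split_indicator)
  finally show ?thesis .
qed

theorem modulus2_radial_image_family:
  "modulus2 (radial_image_family f b) = ennreal (integral {0..2*pi} (\<lambda>\<theta>. inverse (radial_dil_integral f b \<theta>)))
   \<and> admissible2 (radial_image_family f b) (rho0 f g b)
   \<and> modulus2 (radial_image_family f b) = (\<integral>\<^sup>+w. (rho0 f g b w)\<^sup>2 \<partial>lborel)"
proof -
  have "modulus2 (radial_image_family f b) = (\<integral>\<^sup>+w. (rho0 f g b w)\<^sup>2 \<partial>lborel)"
    using admissible2_rho0 nn_integral_sq_ge_of_admissible2
    by (intro modulus2_eq_extremal) (auto simp: nn_integral_rho0_sq)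
  then show ?thesis
    using admissible2_rho0 nn_integral_rho0_sq by simp
qed
end


theorem proposition2p9:
  fixes f g :: "complex \<Rightarrow> complex" and U :: "complex set" and b :: real
  assumes b: "b > 1"
    and U: "open U" "annulus b \<subseteq> U"
    and homeo: "homeomorphism U (f ` U) f g"
    and C1: "\<forall>z\<in>U. f differentiable (at z)"
           "continuous_on U (dx f)" "continuous_on U (dy f)"
    and Jpos: "\<forall>z\<in>annulus b. jac f z > 0"
  shows "modulus2 (radial_image_family f b) =
           ennreal (integral {0..2*pi} (\<lambda>\<theta>. inverse (radial_dil_integral f b \<theta>)))
         \<and> admissible2 (radial_image_family f b) (rho0 f g b)
         \<and> modulus2 (radial_image_family f b) = (\<integral>\<^sup>+ w. (rho0 f g b w)\<^sup>2 \<partial>lborel)"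
proof -
  interpret annulus_C1_homeomorphism f g b
  proof
    show "homeomorphism (annulus b) (f ` annulus b) f g"
      using homeomorphism_of_subsets[OF homeo U(2)] U(2) by blast
  qed (use b U(2) C1 Jpos in \<open>auto intro: continuous_on_subset\<close>)
  show ?thesis
    by (rule modulus2_radial_image_family)
qed

end
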